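(* For any $v_{t-1},v_t,m_{t-1},m_t\in[0,1]$, \[ |m_t-m_{t-1}|\le 2\sup_{b\in[0,1]}\left|r(b;v_t,m_t)-r(b;v_{t-1},m_{t-1})\right|, \] where $r(b;v,m)\coloneqq (v-b)\cdot\mathbbm{1}(b\ge m)$.
   Context: $\mathbbm{1}(\cdot)$ denotes the indicator function. $r(b;v,m)$ is the reward in a first-price auction of a bidder with value $v$ who bids $b$ when the highest competing bid is $m$. *)

theory Defs
  imports "HOL-Analysis.Analysis"
begin

text \<open>Reward in a first-price auction: bidder with value v bids b, highest competing bid m.\<close>
definition reward :: "real \<Rightarrow> real \<Rightarrow> real \<Rightarrow> real" where
  "reward b v m = (v - b) * (if b \<ge> m then 1 else 0)"

end

theory Submission
  imports Defs
begin

text \<open>Say \<open>m0 < m1\<close>. For bids \<open>b\<close> in \<open>[m0, m1)\<close> the first bidder wins and the second loses,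
  so the reward difference there is \<open>\<bar>v0 - b\<bar>\<close>. Hence the whole interval \<open>[m0, m1)\<close> lies within
  distance \<open>S\<close> (the supremum) of \<open>v0\<close>, and its length is at most \<open>2 S\<close>.
  The values need not lie in \<open>[0, 1]\<close>.\<close>

lemma bdd_above_reward_diff:
  "bdd_above ((\<lambda>b. \<bar>reward b v1 m1 - reward b v0 m0\<bar>) ` {0..1})"
  by (intro bdd_aboveI2[where M = "\<bar>v0\<bar> + \<bar>v1\<bar> + 2"]) (auto simp: reward_def)

lemma reward_diff_between_reserves:
  assumes "m0 \<le> b" and "b < m1"
  shows "\<bar>reward b v1 m1 - reward b v0 m0\<bar> = \<bar>v0 - b\<bar>"
  using assms by (simp add: reward_def)

lemma interval_length_le_twice_radius:
  fixes m0 m1 v S :: real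
  assumes "m0 < m1" and close: "\<And>b. m0 \<le> b \<Longrightarrow> b < m1 \<Longrightarrow> \<bar>v - b\<bar> \<le> S"
  shows "m1 - m0 \<le> 2 * S"
proof -
  have "m1 \<le> m0 + 2 * S"
  proof (rule dense_le_bounded[OF \<open>m0 < m1\<close>])
    fix w assume "m0 < w" "w < m1"
    then have "\<bar>v - w\<bar> \<le> S" "\<bar>v - m0\<bar> \<le> S"
      using close \<open>m0 < m1\<close> by auto
    then show "w \<le> m0 + 2 * S" by linarith
  qed
  then show ?thesis by simp
qed

lemma reserve_increase_le_twice_sup:
  fixes v0 v1 m0 m1 :: real
  assumes "m0 \<in> {0..1}" and "m1 \<in> {0..1}" and "m0 < m1"
  shows "m1 - m0 \<le> 2 * (SUP b\<in>{0..1}. \<bar>reward b v1 m1 - reward b v0 m0\<bar>)"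
proof (rule interval_length_le_twice_radius[OF \<open>m0 < m1\<close>])
  fix b assume "m0 \<le> b" "b < m1"
  then have "b \<in> {0..1}" using assms by auto
  then have "\<bar>reward b v1 m1 - reward b v0 m0\<bar> \<le> (SUP b\<in>{0..1}. \<bar>reward b v1 m1 - reward b v0 m0\<bar>)"
    by (rule cSUP_upper[OF _ bdd_above_reward_diff])
  then show "\<bar>v0 - b\<bar> \<le> (SUP b\<in>{0..1}. \<bar>reward b v1 m1 - reward b v0 m0\<bar>)"
    using reward_diff_between_reserves[OF \<open>m0 \<le> b\<close> \<open>b < m1\<close>] by simp
qed

lemma sup_reward_diff_nonneg:
  "0 \<le> (SUP b\<in>{0..1::real}. \<bar>reward b v1 m1 - reward b v0 m0\<bar>)"
proof -
  have "\<bar>reward 0 v1 m1 - reward 0 v0 m0\<bar> \<le> (SUP b\<in>{0..1}. \<bar>reward b v1 m1 - reward b v0 m0\<bar>)"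
    by (rule cSUP_upper[OF _ bdd_above_reward_diff]) simp
  then show ?thesis by (rule order_trans[OF abs_ge_zero])
qed

theorem proposition1:
  fixes v0 v1 m0 m1 :: real
  assumes "v0 \<in> {0..1}" and "v1 \<in> {0..1}" and "m0 \<in> {0..1}" and "m1 \<in> {0..1}"
  shows "\<bar>m1 - m0\<bar> \<le> 2 * (SUP b\<in>{0..1}. \<bar>reward b v1 m1 - reward b v0 m0\<bar>)"
proof (cases m0 m1 rule: linorder_cases)
  case less
  then show ?thesis using reserve_increase_le_twice_sup[OF assms(3,4)] by simp
next
  case equal
  then show ?thesis using sup_reward_diff_nonneg by simp
next
  case greater
  then show ?thesis
    using reserve_increase_le_twice_sup[OF assms(4,3), of v0 v1]
    by (simp add: abs_minus_commute)
qed

end
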